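(* Let $A\in\mathbb{R}^{m\times N}$, let $x\in\mathbb{R}^N$ be a nonzero $k$-sparse vector and $q\in(1,\infty]$. If $\rho_{q,3^{q/(q-1)}k}(A)>0$, then the unique solution of $\min_{z\in\mathbb{R}^N\setminus\{0\}}\lVert z\rVert_1/\lVert z\rVert_q$ subject to $Az=Ax$ is $x$.
   Context: For nonzero $z\in\mathbb{R}^N$ and $q\in(1,\infty)$, $s_q(z)=\left(\lVert z\rVert_1/\lVert z\rVert_q\right)^{q/(q-1)}$, and $s_\infty(z)=\lVert z\rVert_1/\lVert z\rVert_\infty$. For real $s\ge1$, $\rho_{q,s}(A)=\min\{\lVert Az\rVert_2/\lVert z\rVert_q: z\ne0,\ s_q(z)\le s\}$. For $q=\infty$ interpret $q/(q-1)=1$. A vector is $k$-sparse if it has at most $k$ nonzero entries. *)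

theory Defs
  imports "HOL-Analysis.Analysis"
begin

text \<open>The exponent q ranges over (1,\<infinity>]; we model it as an extended real.\<close>

definition lq_norm :: "ereal \<Rightarrow> real ^ 'n \<Rightarrow> real" where
  "lq_norm q z = (case q of
       ereal r \<Rightarrow> (\<Sum>i\<in>UNIV. \<bar>z $ i\<bar> powr r) powr (1 / r)
     | _ \<Rightarrow> Max (range (\<lambda>i. \<bar>z $ i\<bar>)))"

definition l1_norm :: "real ^ 'n \<Rightarrow> real" where
  "l1_norm z = (\<Sum>i\<in>UNIV. \<bar>z $ i\<bar>)"

definition qexp :: "ereal \<Rightarrow> real" where
  "qexp q = (case q of ereal r \<Rightarrow> r / (r - 1) | _ \<Rightarrow> 1)"

definition sparsity_q :: "ereal \<Rightarrow> real ^ 'n \<Rightarrow> real" where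
  "sparsity_q q z = (l1_norm z / lq_norm q z) powr (qexp q)"

definition rho_qs :: "ereal \<Rightarrow> real \<Rightarrow> real ^ 'n ^ 'm \<Rightarrow> real" where
  "rho_qs q s A = (INF z \<in> {z. z \<noteq> 0 \<and> sparsity_q q z \<le> s}. norm (A *v z) / lq_norm q z)"

definition k_sparse :: "nat \<Rightarrow> real ^ 'n \<Rightarrow> bool" where
  "k_sparse k x \<longleftrightarrow> card {i. x $ i \<noteq> 0} \<le> k"

end

(* Let S be the support of x, so card S <= k, and Hoelder's inequality gives
   sum_{i in S} |z_i| <= c ||z||_q with c = k^(1 - 1/q).  If a feasible w <> x had
   ||w||_1/||w||_q <= ||x||_1/||x||_q, then h = w - x lies in ker A and ||h||_1 <= 3c ||h||_q:
   off S the vectors w and h agree, on S we have ||w_S||_1 >= ||x||_1 - ||h_S||_1, and the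
   ratio bound together with ||w||_q <= ||x||_q + ||h||_q gives ||w||_1 <= ||x||_1 + c ||h||_q.
   Thus s_q(h) <= (3c)^(q/(q-1)) = 3^(q/(q-1)) k, so h is admissible in the infimum defining
   rho, which therefore vanishes. *)
theory Submission
  imports Defs
begin

lemma convex_on_powr_nonneg:
  assumes "1 \<le> p"
  shows "convex_on {0..} (\<lambda>x::real. x powr p)"
proof (rule convex_on_linorderI)
  fix t x y :: real
  assume t: "0 < t" "t < 1" and xy: "x \<in> {0..}" "y \<in> {0..}" "x < y"
  show "((1 - t) *\<^sub>R x + t *\<^sub>R y) powr p \<le> (1 - t) * x powr p + t * y powr p"
  proof (cases "x = 0")
    case False
    then show ?thesis
      using convex_onD[OF powr_convex[OF assms], of t x y] t xy by auto
  next
    case True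
    have "(t * y) powr p = t powr p * y powr p"
      using t xy by (simp add: powr_mult)
    also have "\<dots> \<le> t * y powr p"
      using t assms by (intro mult_right_mono powr_le_one_le) auto
    finally show ?thesis
      using True assms by simp
  qed
qed (simp add: convex_real_interval)

lemma sum_le_card_powr_mult_sum_powr:
  fixes a :: "'a \<Rightarrow> real"
  assumes S: "finite S" and a: "\<And>i. i \<in> S \<Longrightarrow> 0 \<le> a i" and p: "1 \<le> p"
  shows "sum a S \<le> real (card S) powr (1 - 1/p) * (\<Sum>i\<in>S. a i powr p) powr (1/p)"
proof (cases "S = {}")
  case False
  define n where "n = real (card S)"
  have n: "0 < n"
    using S False by (simp add: n_def card_gt_0_iff)
  have "(\<Sum>i\<in>S. (1/n) *\<^sub>R a i) powr p \<le> (\<Sum>i\<in>S. (1/n) * a i powr p)"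
    using S False n a by (intro convex_on_sum[OF _ _ convex_on_powr_nonneg[OF p]]) (auto simp: n_def)
  then have "(sum a S / n) powr p \<le> (\<Sum>i\<in>S. a i powr p) / n"
    by (simp add: sum_divide_distrib)
  then have "((sum a S / n) powr p) powr (1/p) \<le> ((\<Sum>i\<in>S. a i powr p) / n) powr (1/p)"
    using p by (intro powr_mono2) auto
  then have "sum a S / n \<le> (\<Sum>i\<in>S. a i powr p) powr (1/p) / n powr (1/p)"
    using p n a by (simp add: powr_powr powr_divide sum_nonneg)
  then have "sum a S \<le> n / n powr (1/p) * (\<Sum>i\<in>S. a i powr p) powr (1/p)"
    using n by (simp add: field_simps)
  also have "n / n powr (1/p) = n powr (1 - 1/p)"
    using n by (simp add: powr_diff)
  finally show ?thesis
    by (simp add: n_def)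
qed simp

lemma abs_le_Max_abs: "\<bar>z $ i\<bar> \<le> Max (range (\<lambda>j. \<bar>z $ j\<bar>))"
  by (rule Max_ge) auto

lemma lq_norm_nonneg: "0 \<le> lq_norm q z"
  by (cases q) (auto simp: lq_norm_def intro: order_trans[OF abs_ge_zero abs_le_Max_abs])

lemma lq_norm_pos:
  assumes "z \<noteq> 0"
  shows "0 < lq_norm q z"
proof -
  obtain j where j: "z $ j \<noteq> 0"
    using assms by (auto simp: vec_eq_iff)
  show ?thesis
  proof (cases q)
    case (real r)
    have "0 < (\<Sum>i\<in>UNIV. \<bar>z $ i\<bar> powr r)"
      using j by (intro less_le_trans[OF _ member_le_sum[of j]]) (auto simp: sum_nonneg)
    then show ?thesis
      by (simp add: lq_norm_def real)
  qed (use j less_le_trans[OF _ abs_le_Max_abs[of z j]] in \<open>auto simp: lq_norm_def\<close>)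
qed

lemma lq_norm_ereal_powr:
  assumes "0 < r"
  shows "lq_norm (ereal r) z powr r = (\<Sum>i\<in>UNIV. \<bar>z $ i\<bar> powr r)"
  using assms by (simp add: lq_norm_def powr_powr sum_nonneg)

lemma lq_norm_ereal_scaleR:
  assumes "r \<noteq> 0"
  shows "lq_norm (ereal r) (c *\<^sub>R z) = \<bar>c\<bar> * lq_norm (ereal r) z"
  using assms
  by (simp add: lq_norm_def abs_mult powr_mult sum_distrib_left[symmetric] powr_powr sum_nonneg)

lemma convex_on_sum_abs_powr:
  assumes "1 \<le> r"
  shows "convex_on UNIV (\<lambda>z::real ^ 'n. \<Sum>i\<in>UNIV. \<bar>z $ i\<bar> powr r)"
proof (rule convex_onI)
  fix t :: real and u v :: "real ^ 'n"
  assume t: "0 < t" "t < 1"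
  have "\<bar>((1 - t) *\<^sub>R u + t *\<^sub>R v) $ i\<bar> powr r \<le> (1 - t) * \<bar>u $ i\<bar> powr r + t * \<bar>v $ i\<bar> powr r"
    for i
  proof -
    have "\<bar>((1 - t) *\<^sub>R u + t *\<^sub>R v) $ i\<bar> \<le> (1 - t) * \<bar>u $ i\<bar> + t * \<bar>v $ i\<bar>"
      using t abs_triangle_ineq[of "(1 - t) * u $ i" "t * v $ i"] by (simp add: abs_mult)
    then have "\<bar>((1 - t) *\<^sub>R u + t *\<^sub>R v) $ i\<bar> powr r \<le> ((1 - t) * \<bar>u $ i\<bar> + t * \<bar>v $ i\<bar>) powr r"
      using assms by (intro powr_mono2) auto
    also have "\<dots> \<le> (1 - t) * \<bar>u $ i\<bar> powr r + t * \<bar>v $ i\<bar> powr r"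
      using convex_onD[OF convex_on_powr_nonneg[OF assms], of t "\<bar>u $ i\<bar>" "\<bar>v $ i\<bar>"] t by simp
    finally show ?thesis .
  qed
  then have "(\<Sum>i\<in>UNIV. \<bar>((1 - t) *\<^sub>R u + t *\<^sub>R v) $ i\<bar> powr r)
      \<le> (\<Sum>i\<in>UNIV. (1 - t) * \<bar>u $ i\<bar> powr r + t * \<bar>v $ i\<bar> powr r)"
    by (rule sum_mono)
  then show "(\<Sum>i\<in>UNIV. \<bar>((1 - t) *\<^sub>R u + t *\<^sub>R v) $ i\<bar> powr r)
      \<le> (1 - t) * (\<Sum>i\<in>UNIV. \<bar>u $ i\<bar> powr r) + t * (\<Sum>i\<in>UNIV. \<bar>v $ i\<bar> powr r)"
    by (simp add: sum.distrib sum_distrib_left)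
qed simp

text \<open>Minkowski's inequality, via convexity of the unit ball: \<open>u + v\<close> divided by
  \<open>\<parallel>u\<parallel> + \<parallel>v\<parallel>\<close> is a convex combination of the unit vectors \<open>u/\<parallel>u\<parallel>\<close> and \<open>v/\<parallel>v\<parallel>\<close>.\<close>
lemma lq_norm_ereal_triangle:
  assumes r: "1 \<le> r"
  shows "lq_norm (ereal r) (u + v) \<le> lq_norm (ereal r) u + lq_norm (ereal r) v"
proof (cases "u = 0 \<or> v = 0")
  case False
  let ?N = "lq_norm (ereal r)" and ?P = "\<lambda>z::real ^ 'a. \<Sum>i\<in>UNIV. \<bar>z $ i\<bar> powr r"
  define a b where "a = ?N u" and "b = ?N v"
  have a: "0 < a" and b: "0 < b"
    using False by (auto simp: a_def b_def intro: lq_norm_pos)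
  have unit: "?P ((1/c) *\<^sub>R z) = 1" if "c = ?N z" "0 < c" for c z
    using that r lq_norm_ereal_powr[of r "(1/c) *\<^sub>R z"] lq_norm_ereal_scaleR[of r "1/c" z] by simp
  define t where "t = b / (a + b)"
  have t: "0 \<le> t" "t \<le> 1"
    using a b by (auto simp: t_def)
  have "(1 - t) *\<^sub>R ((1/a) *\<^sub>R u) + t *\<^sub>R ((1/b) *\<^sub>R v) = (1/(a + b)) *\<^sub>R (u + v)"
    using a b by (simp add: t_def scaleR_add_right field_simps)
  then have "?P ((1/(a + b)) *\<^sub>R (u + v)) \<le> 1"
    using convex_onD[OF convex_on_sum_abs_powr[OF r] t, of "(1/a) *\<^sub>R u" "(1/b) *\<^sub>R v"]
      unit[OF a_def a] unit[OF b_def b] by simp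
  then have "?N ((1/(a + b)) *\<^sub>R (u + v)) \<le> 1"
    using powr_le1[of "1/r" "?P ((1/(a + b)) *\<^sub>R (u + v))"] r by (simp add: lq_norm_def sum_nonneg)
  then show ?thesis
    using a b lq_norm_ereal_scaleR[of r "1/(a + b)" "u + v"] r by (simp add: a_def b_def)
qed (auto simp: lq_norm_nonneg)

lemma lq_norm_triangle:
  assumes "1 \<le> q"
  shows "lq_norm q (u + v) \<le> lq_norm q u + lq_norm q v"
proof (cases q)
  case (real r)
  then show ?thesis
    using assms lq_norm_ereal_triangle[of r] by simp
next
  case PInf
  have Max: "lq_norm q z = Max (range (\<lambda>i. \<bar>z $ i\<bar>))" for z :: "real ^ 'a"
    by (simp add: lq_norm_def PInf)
  have "\<bar>(u + v) $ i\<bar> \<le> lq_norm q u + lq_norm q v" for i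
    using abs_triangle_ineq[of "u $ i" "v $ i"] abs_le_Max_abs[of u i] abs_le_Max_abs[of v i]
    unfolding Max vector_add_component by linarith
  then show ?thesis
    unfolding Max[of "u + v"] by (intro Max.boundedI) auto
qed (use assms in simp)

lemma qexp_pos: "1 < q \<Longrightarrow> 0 < qexp q"
  by (cases q) (auto simp: qexp_def)

text \<open>Hoelder's inequality against the indicator of \<open>S\<close>; the exponent \<open>1 / qexp q\<close> is
  the conjugate exponent \<open>1 - 1/q\<close> (and \<open>1\<close> for \<open>q = \<infinity>\<close>).\<close>
lemma sum_abs_le_card_powr_lq_norm:
  fixes z :: "real ^ 'n"
  assumes "1 < q"
  shows "(\<Sum>i\<in>S. \<bar>z $ i\<bar>) \<le> real (card S) powr (1 / qexp q) * lq_norm q z"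
proof (cases q)
  case (real r)
  then have r: "1 < r"
    using assms by simp
  have "(\<Sum>i\<in>S. \<bar>z $ i\<bar>) \<le> real (card S) powr (1 - 1/r) * (\<Sum>i\<in>S. \<bar>z $ i\<bar> powr r) powr (1/r)"
    using r by (intro sum_le_card_powr_mult_sum_powr) auto
  also have "\<dots> \<le> real (card S) powr (1 - 1/r) * (\<Sum>i\<in>UNIV. \<bar>z $ i\<bar> powr r) powr (1/r)"
    using r by (intro mult_left_mono powr_mono2 sum_mono2) (auto simp: sum_nonneg)
  also have "1 - 1/r = 1 / qexp q"
    using r by (simp add: qexp_def real field_simps)
  finally show ?thesis
    by (simp add: lq_norm_def real)
next
  case PInf
  have "(\<Sum>i\<in>S. \<bar>z $ i\<bar>) \<le> real (card S) * lq_norm q z"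
    using sum_bounded_above[of S "\<lambda>i. \<bar>z $ i\<bar>"] abs_le_Max_abs[of z] by (simp add: lq_norm_def PInf)
  then show ?thesis
    by (simp add: qexp_def PInf)
qed (use assms in simp)

lemma sum_support_le_lq_norm:
  assumes "k_sparse k x" and "1 < q"
  shows "(\<Sum>i\<in>{i. x $ i \<noteq> 0}. \<bar>z $ i\<bar>) \<le> real k powr (1 / qexp q) * lq_norm q z"
proof -
  have "real (card {i. x $ i \<noteq> 0}) powr (1 / qexp q) \<le> real k powr (1 / qexp q)"
    using assms qexp_pos[of q] by (intro powr_mono2) (auto simp: k_sparse_def)
  then show ?thesis
    using sum_abs_le_card_powr_lq_norm[OF assms(2), where S = "{i. x $ i \<noteq> 0}" and z = z] lq_norm_nonneg[of q z]
    by (meson mult_right_mono order_trans)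
qed

lemma l1_norm_diff_le_if_ratio_le:
  fixes N :: "real ^ 'n \<Rightarrow> real" and x w :: "real ^ 'n"
  assumes N_pos: "\<And>z. z \<noteq> 0 \<Longrightarrow> 0 < N z"
    and N_triangle: "\<And>u v. N (u + v) \<le> N u + N v"
    and support: "\<And>z. (\<Sum>i\<in>{i. x $ i \<noteq> 0}. \<bar>z $ i\<bar>) \<le> c * N z"
    and "x \<noteq> 0" and "w \<noteq> 0"
    and ratio: "l1_norm w / N w \<le> l1_norm x / N x"
  shows "l1_norm (w - x) \<le> 3 * c * N (w - x)"
proof -
  define S h where "S = {i. x $ i \<noteq> 0}" and "h = w - x"
  have split: "l1_norm z = (\<Sum>i\<in>S. \<bar>z $ i\<bar>) + (\<Sum>i\<in>-S. \<bar>z $ i\<bar>)" for z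
    unfolding l1_norm_def using sum.Int_Diff[of UNIV _ S] by (simp add: Compl_eq_Diff_UNIV)
  have Nx: "0 < N x" and Nw: "0 < N w"
    using N_pos assms(4,5) by auto
  have Nh: "0 \<le> N h"
    using N_pos[of h] N_triangle[of 0 0] by (cases "h = 0") auto
  have l1x: "l1_norm x = (\<Sum>i\<in>S. \<bar>x $ i\<bar>)"
    using split[of x] by (simp add: S_def)
  have ratio_x: "l1_norm x / N x \<le> c"
    using support[of x] Nx by (simp add: l1x S_def divide_le_eq)
  have loss: "l1_norm x - (\<Sum>i\<in>S. \<bar>h $ i\<bar>) + (\<Sum>i\<in>-S. \<bar>h $ i\<bar>) \<le> l1_norm w"
  proof -
    have "(\<Sum>i\<in>S. \<bar>x $ i\<bar> - \<bar>h $ i\<bar>) \<le> (\<Sum>i\<in>S. \<bar>w $ i\<bar>)"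
      unfolding h_def by (intro sum_mono) (simp add: abs_triangle_ineq4)
    moreover have "(\<Sum>i\<in>-S. \<bar>w $ i\<bar>) = (\<Sum>i\<in>-S. \<bar>h $ i\<bar>)"
      by (rule sum.cong) (auto simp: S_def h_def)
    ultimately show ?thesis
      using split[of w] by (simp add: l1x sum_subtractf)
  qed
  have "l1_norm w \<le> l1_norm x / N x * N w"
    using ratio Nw by (simp add: divide_le_eq)
  also have "\<dots> \<le> l1_norm x / N x * (N x + N h)"
    using N_triangle[of x h] Nx by (intro mult_left_mono) (auto simp: h_def l1_norm_def sum_nonneg)
  also have "\<dots> = l1_norm x + l1_norm x / N x * N h"
    using Nx by (simp add: field_simps)
  also have "\<dots> \<le> l1_norm x + c * N h"
    using mult_right_mono[OF ratio_x Nh] by simp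
  finally have "l1_norm w \<le> l1_norm x + c * N h" .
  with loss support[of h] show ?thesis
    using split[of h] by (simp add: S_def h_def)
qed

lemma sparsity_q_gt_if_rho_qs_pos:
  fixes A :: "real ^ 'n ^ 'm"
  assumes "0 < rho_qs q s A" and "h \<noteq> 0" and "A *v h = 0"
  shows "s < sparsity_q q h"
proof (rule ccontr)
  assume "\<not> s < sparsity_q q h"
  then have "h \<in> {z. z \<noteq> 0 \<and> sparsity_q q z \<le> s}"
    using assms(2) by auto
  moreover have "bdd_below ((\<lambda>z. norm (A *v z) / lq_norm q z) ` {z. z \<noteq> 0 \<and> sparsity_q q z \<le> s})"
    by (rule bdd_belowI[where m = 0]) (auto intro: divide_nonneg_nonneg lq_norm_nonneg)
  ultimately have "rho_qs q s A \<le> norm (A *v h) / lq_norm q h"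
    unfolding rho_qs_def by (rule cINF_lower[rotated])
  then show False
    using assms(1,3) by simp
qed

lemma l1_norm_gt_if_rho_qs_pos:
  fixes A :: "real ^ 'n ^ 'm"
  assumes "1 < q" and "0 \<le> c" and "0 < rho_qs q (c powr qexp q) A"
    and "h \<noteq> 0" and "A *v h = 0"
  shows "c * lq_norm q h < l1_norm h"
proof -
  have "c powr qexp q < (l1_norm h / lq_norm q h) powr qexp q"
    using sparsity_q_gt_if_rho_qs_pos[OF assms(3-5)] by (simp add: sparsity_q_def)
  moreover have "0 \<le> l1_norm h / lq_norm q h"
    by (simp add: l1_norm_def sum_nonneg lq_norm_nonneg)
  ultimately have "c < l1_norm h / lq_norm q h"
    using powr_mono2[of "qexp q" "l1_norm h / lq_norm q h" c] qexp_pos[OF assms(1)] assms(2)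
    by (meson less_imp_le not_le)
  then show ?thesis
    using lq_norm_pos[OF assms(4)] by (simp add: pos_less_divide_eq)
qed

lemma minimizers_eq_singleton:
  fixes f :: "'a \<Rightarrow> 'b::linorder"
  assumes "P x" and "\<And>w. P w \<Longrightarrow> f w \<le> f x \<Longrightarrow> w = x"
  shows "{z. P z \<and> (\<forall>w. P w \<longrightarrow> f z \<le> f w)} = {x}"
  using assms by auto (metis nle_le)

theorem corollary1:
  fixes A :: "real ^ 'n ^ 'm" and x :: "real ^ 'n" and k :: nat and q :: ereal
  assumes "x \<noteq> 0" and "k_sparse k x" and "1 < q"
    and "rho_qs q (3 powr (qexp q) * real k) A > 0"
  shows "{z. z \<noteq> 0 \<and> A *v z = A *v x \<and>
             (\<forall>w. w \<noteq> 0 \<and> A *v w = A *v x \<longrightarrow>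
                  l1_norm z / lq_norm q z \<le> l1_norm w / lq_norm q w)} = {x}"
proof -
  define c where "c = real k powr (1 / qexp q)"
  have c_powr: "(3 * c) powr qexp q = 3 powr qexp q * real k"
    using qexp_pos[OF assms(3)] by (simp add: c_def powr_mult powr_powr)
  have ratio_le_imp_eq: "w = x"
    if "w \<noteq> 0" "A *v w = A *v x" "l1_norm w / lq_norm q w \<le> l1_norm x / lq_norm q x" for w
  proof (rule ccontr)
    assume "w \<noteq> x"
    have "l1_norm (w - x) \<le> 3 * c * lq_norm q (w - x)"
      using assms(1,3) that sum_support_le_lq_norm[OF assms(2,3)]
      by (intro l1_norm_diff_le_if_ratio_le[where N = "lq_norm q"])
        (auto simp: c_def lq_norm_pos lq_norm_triangle)
    moreover have "3 * c * lq_norm q (w - x) < l1_norm (w - x)"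
      using assms(3,4) c_powr \<open>w \<noteq> x\<close> that(2)
      by (intro l1_norm_gt_if_rho_qs_pos) (auto simp: c_def matrix_vector_mult_diff_distrib)
    ultimately show False
      by simp
  qed
  show ?thesis
    using minimizers_eq_singleton[of "\<lambda>z. z \<noteq> 0 \<and> A *v z = A *v x" x
        "\<lambda>z. l1_norm z / lq_norm q z"] assms(1) ratio_le_imp_eq
    by simp
qed

end
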